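(* Let $P$ be a finite nonempty poset with $p$ elements, and let $\epsilon$ and $\mu$ be the labelings of the covering relations $E(P)$ induced by two bijections $\omega,\lambda:P\to\{1,\dots,p\}$. Suppose that $P$ is both $\epsilon$-graded and $\mu$-graded. Then, as polynomials in $t$, $$\Omega\Big(P,\epsilon;t-\frac{r(\epsilon)}{2}\Big)=\Omega\Big(P,\mu;t-\frac{r(\mu)}{2}\Big).$$
   Context: A labeling of a finite poset $P$ with $p$ elements is a bijection $\omega:P\to\{1,\dots,p\}$. Write $x\prec y$ if $y$ covers $x$ and $E(P)=\{(x,y):x\prec y\}$. The labeling $\omega$ induces $\epsilon:E(P)\to\{-1,1\}$, $\epsilon(x,y)=1$ if $\omega(x)<\omega(y)$ and $\epsilon(x,y)=-1$ if $\omega(x)>\omega(y)$. A $(P,\epsilon)$-partition is a map $\sigma:P\to\{1,2,3,\dots\}$ with $\sigma(x)\ge\sigma(y)$ whenever $x\le y$, and $\sigma(x)>\sigma(y)$ whenever $x<y$ and $\omega(x)>\omega(y)$ (equivalently, whenever $x\prec y$ and $\epsilon(x,y)=-1$; so this depends only on $\epsilon$). The order polynomial $\Omega(P,\epsilon;n)$ is the number of $(P,\epsilon)$-partitions with largest part at most $n$; it is a polynomial in $n$ of degree $p$. $P$ is $\epsilon$-graded if the sum $\sum_{i=1}^n\epsilon(x_{i-1},x_i)$ takes the same value for every maximal chain $x_0\prec x_1\prec\cdots\prec x_n$ of $P$; this common value is the rank $r(\epsilon)$. *)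

theory Defs
  imports "HOL-Library.FuncSet" "HOL-Computational_Algebra.Polynomial"
begin

text \<open>A finite poset is a finite set P of elements of an ordered type, with the
induced order. Labelings are bijections P -> {1..card P}.\<close>

definition covers :: "'a::order set \<Rightarrow> 'a \<Rightarrow> 'a \<Rightarrow> bool" where
  "covers P x y \<longleftrightarrow> x \<in> P \<and> y \<in> P \<and> x < y \<and> \<not> (\<exists>z\<in>P. x < z \<and> z < y)"

definition is_labeling :: "'a set \<Rightarrow> ('a \<Rightarrow> nat) \<Rightarrow> bool" where
  "is_labeling P \<omega> \<longleftrightarrow> bij_betw \<omega> P {1..card P}"

definition eps :: "('a \<Rightarrow> nat) \<Rightarrow> 'a \<Rightarrow> 'a \<Rightarrow> int" where
  "eps \<omega> x y = (if \<omega> x < \<omega> y then 1 else -1)"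

definition maximal_chain :: "'a::order set \<Rightarrow> 'a list \<Rightarrow> bool" where
  "maximal_chain P xs \<longleftrightarrow> xs \<noteq> [] \<and>
     (\<forall>i. Suc i < length xs \<longrightarrow> covers P (xs ! i) (xs ! Suc i)) \<and>
     hd xs \<in> P \<and> last xs \<in> P \<and>
     \<not> (\<exists>z\<in>P. z < hd xs) \<and> \<not> (\<exists>z\<in>P. last xs < z)"

definition chain_eps_sum :: "('a \<Rightarrow> nat) \<Rightarrow> 'a list \<Rightarrow> int" where
  "chain_eps_sum \<omega> xs = (\<Sum>i<length xs - 1. eps \<omega> (xs ! i) (xs ! Suc i))"

definition eps_graded :: "'a::order set \<Rightarrow> ('a \<Rightarrow> nat) \<Rightarrow> bool" where
  "eps_graded P \<omega> \<longleftrightarrow> (\<exists>r. \<forall>xs. maximal_chain P xs \<longrightarrow> chain_eps_sum \<omega> xs = r)"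

definition eps_rank :: "'a::order set \<Rightarrow> ('a \<Rightarrow> nat) \<Rightarrow> int" where
  "eps_rank P \<omega> = (THE r. \<forall>xs. maximal_chain P xs \<longrightarrow> chain_eps_sum \<omega> xs = r)"

text \<open>(P,eps)-partitions with largest part at most n (functions are taken extensional
on P, i.e. undefined outside P).\<close>
definition P_partitions :: "'a::order set \<Rightarrow> ('a \<Rightarrow> nat) \<Rightarrow> nat \<Rightarrow> ('a \<Rightarrow> nat) set" where
  "P_partitions P \<omega> n = {\<sigma> \<in> P \<rightarrow>\<^sub>E {1..n}.
      (\<forall>x\<in>P. \<forall>y\<in>P. x \<le> y \<longrightarrow> \<sigma> x \<ge> \<sigma> y) \<and>
      (\<forall>x\<in>P. \<forall>y\<in>P. x < y \<and> \<omega> x > \<omega> y \<longrightarrow> \<sigma> x > \<sigma> y)}"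

definition order_poly :: "'a::order set \<Rightarrow> ('a \<Rightarrow> nat) \<Rightarrow> real poly" where
  "order_poly P \<omega> = (THE q. \<forall>n\<ge>1. poly q (real n) = real (card (P_partitions P \<omega> n)))"

end

(*
  Gradedness makes the eps-sum along a saturated chain from a minimal element up to x
  independent of the chain. This height h_eps(x) grows by eps(x,y) across every cover
  x < y, vanishes on minimal elements and equals r(eps) on maximal ones. Hence the integer
  potential D = (h_mu - h_eps - (r(mu) - r(eps)))/2 changes by (mu(x,y) - eps(x,y))/2
  across covers, is 0 on maximal elements and c = (r(eps) - r(mu))/2 on minimal ones.
  Adding D to a (P,eps)-partition with parts at most n gives a (P,mu)-partition with
  parts at most n + c, and subtracting D inverts this, so Omega(P,eps;n) = Omega(P,mu;n + c)
  for all large n; substituting n = t - r(eps)/2 gives the identity of polynomials.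
  Omega is a polynomial because grouping the partitions by their set of values gives
  Omega(P,eps;n) = sum_k e_k (n choose k), where e_k counts the partitions onto {1..k}.
*)

theory Submission
  imports Defs
begin

section \<open>The order polynomial as a binomial sum\<close>

lemma finite_P_partitions: "finite P \<Longrightarrow> finite (P_partitions P \<omega> n)"
  unfolding P_partitions_def
  by (rule finite_subset[OF _ finite_PiE[of P "\<lambda>_. {1..n}"]]) auto

lemma P_partitions_comp_strict_mono:
  assumes "\<sigma> \<in> P_partitions P \<omega> n" "\<sigma> ` P \<subseteq> S"
    and h: "strict_mono_on S h" "h ` S \<subseteq> {1..m}"
  shows "restrict (h \<circ> \<sigma>) P \<in> P_partitions P \<omega> m"
  using assms unfolding P_partitions_def
  by (auto simp: image_subset_iff strict_mono_on_less_eq[OF h(1)] strict_mono_on_less[OF h(1)])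

lemma strict_mono_on_the_inv_into:
  fixes h :: "'a::linorder \<Rightarrow> 'b::linorder"
  assumes "strict_mono_on S h"
  shows "strict_mono_on (h ` S) (the_inv_into S h)"
proof (rule strict_mono_onI)
  have inj: "inj_on h S" using assms by (rule strict_mono_on_imp_inj_on)
  fix i j assume "i \<in> h ` S" "j \<in> h ` S" "i < j"
  then obtain a b where "a \<in> S" "b \<in> S" "i = h a" "j = h b" "h a < h b" by auto
  then show "the_inv_into S h i < the_inv_into S h j"
    using strict_mono_on_less[OF assms] by (simp add: the_inv_into_f_f[OF inj])
qed

lemma card_P_partitions_image_eq:
  assumes h: "bij_betw h S T" "strict_mono_on S h" and "S \<subseteq> {1..n}" "T \<subseteq> {1..m}"
  shows "card {\<sigma> \<in> P_partitions P \<omega> n. \<sigma> ` P = S} = card {\<tau> \<in> P_partitions P \<omega> m. \<tau> ` P = T}"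
proof -
  define g where "g = the_inv_into S h"
  have g: "bij_betw g T S" "strict_mono_on T g"
    using h bij_betw_the_inv_into strict_mono_on_the_inv_into unfolding g_def bij_betw_def by blast+
  let ?A = "{\<sigma> \<in> P_partitions P \<omega> n. \<sigma> ` P = S}" and ?B = "{\<tau> \<in> P_partitions P \<omega> m. \<tau> ` P = T}"
  have ext: "\<sigma> \<in> extensional P" if "\<sigma> \<in> P_partitions P \<omega> k" for \<sigma> k
    using that unfolding P_partitions_def by (auto simp: PiE_def)
  have "bij_betw (\<lambda>\<sigma>. restrict (h \<circ> \<sigma>) P) ?A ?B"
  proof (rule bij_betw_byWitness[where f' = "\<lambda>\<tau>. restrict (g \<circ> \<tau>) P"])
    show "\<forall>\<sigma>\<in>?A. restrict (g \<circ> restrict (h \<circ> \<sigma>) P) P = \<sigma>"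
    proof
      fix \<sigma> assume "\<sigma> \<in> ?A"
      then show "restrict (g \<circ> restrict (h \<circ> \<sigma>) P) P = \<sigma>"
        using h(1) ext unfolding g_def bij_betw_def
        by (intro extensionalityI[where A = P]) (auto simp: the_inv_into_f_f)
    qed
    show "\<forall>\<tau>\<in>?B. restrict (h \<circ> restrict (g \<circ> \<tau>) P) P = \<tau>"
    proof
      fix \<tau> assume "\<tau> \<in> ?B"
      then show "restrict (h \<circ> restrict (g \<circ> \<tau>) P) P = \<tau>"
        using h(1) ext unfolding g_def bij_betw_def
        by (intro extensionalityI[where A = P]) (auto simp: f_the_inv_into_f)
    qed
    show "(\<lambda>\<sigma>. restrict (h \<circ> \<sigma>) P) ` ?A \<subseteq> ?B"
      using h assms(4) P_partitions_comp_strict_mono[of _ P \<omega> n S h m]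
      by (auto simp: bij_betw_def image_comp[symmetric])
    show "(\<lambda>\<tau>. restrict (g \<circ> \<tau>) P) ` ?B \<subseteq> ?A"
      using g assms(3) P_partitions_comp_strict_mono[of _ P \<omega> m T g n]
      by (auto simp: bij_betw_def image_comp[symmetric])
  qed
  then show ?thesis by (rule bij_betw_same_card)
qed

definition surj_P_partitions :: "'a::order set \<Rightarrow> ('a \<Rightarrow> nat) \<Rightarrow> nat \<Rightarrow> ('a \<Rightarrow> nat) set" where
  "surj_P_partitions P \<omega> k = {\<tau> \<in> P_partitions P \<omega> k. \<tau> ` P = {1..k}}"

lemma ex_bij_betw_strict_mono_atLeastAtMost:
  fixes S :: "'a::wellorder set"
  assumes "finite S"
  obtains h where "bij_betw h {1..card S} S" and "strict_mono_on {1..card S} h"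
proof -
  obtain h where h: "bij_betw h {..<card S} S" "strict_mono_on {..<card S} h"
    using ex_bij_betw_strict_mono_card[OF assms] by blast
  have "bij_betw (\<lambda>i. i - 1) {1..card S} {..<card S}"
    by (rule bij_betw_byWitness[where f' = Suc]) auto
  then have "bij_betw (\<lambda>i. h (i - 1)) {1..card S} S"
    using bij_betw_trans[OF _ h(1)] by (simp add: comp_def)
  moreover have "strict_mono_on {1..card S} (\<lambda>i. h (i - 1))"
    by (intro strict_mono_onI) (auto intro!: strict_mono_onD[OF h(2)])
  ultimately show ?thesis by (rule that)
qed

lemma card_P_partitions_image:
  assumes "S \<subseteq> {1..n}"
  shows "card {\<sigma> \<in> P_partitions P \<omega> n. \<sigma> ` P = S} = card (surj_P_partitions P \<omega> (card S))"
proof -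
  have "finite S" using assms finite_subset by blast
  then obtain h where "bij_betw h {1..card S} S" "strict_mono_on {1..card S} h"
    by (rule ex_bij_betw_strict_mono_atLeastAtMost)
  then show ?thesis
    unfolding surj_P_partitions_def using assms by (subst card_P_partitions_image_eq) auto
qed

lemma surj_P_partitions_eq_empty:
  assumes "finite P" "card P < k"
  shows "surj_P_partitions P \<omega> k = {}"
proof -
  have "\<tau> ` P \<noteq> {1..k}" for \<tau>
    using card_image_le[OF assms(1), of \<tau>] assms(2) by auto
  then show ?thesis unfolding surj_P_partitions_def by blast
qed

lemma card_P_partitions_binomial_sum:
  assumes "finite P"
  shows "card (P_partitions P \<omega> n) = (\<Sum>k\<le>card P. card (surj_P_partitions P \<omega> k) * (n choose k))"
proof -
  let ?A = "P_partitions P \<omega> n" and ?e = "\<lambda>k. card (surj_P_partitions P \<omega> k)"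
  have "(\<lambda>\<sigma>. \<sigma> ` P) ` ?A \<subseteq> Pow {1..n}"
    unfolding P_partitions_def by auto
  then have "(\<Sum>\<sigma>\<in>?A. 1) = (\<Sum>S\<in>Pow {1..n}. \<Sum>\<sigma>\<in>{\<sigma> \<in> ?A. \<sigma> ` P = S}. 1::nat)"
    by (intro sum.group[symmetric] finite_P_partitions assms) auto
  then have "card ?A = (\<Sum>S\<in>Pow {1..n}. card {\<sigma> \<in> ?A. \<sigma> ` P = S})"
    by simp
  also have "\<dots> = (\<Sum>S\<in>Pow {1..n}. ?e (card S))"
    by (intro sum.cong refl) (simp add: card_P_partitions_image)
  also have "\<dots> = (\<Sum>k\<le>n. \<Sum>S\<in>{S. S \<in> Pow {1..n} \<and> card S = k}. ?e (card S))"
    by (rule sum.group[symmetric]) (auto intro: card_mono[of "{1..n}", simplified])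
  also have "\<dots> = (\<Sum>k\<le>n. ?e k * (n choose k))"
    using n_subsets[of "{1..n}"] by (simp add: mult.commute)
  also have "\<dots> = (\<Sum>k\<le>card P. ?e k * (n choose k))"
    using surj_P_partitions_eq_empty[OF assms]
    by (intro sum.mono_neutral_cong) auto
  finally show ?thesis .
qed

definition binomial_poly :: "nat \<Rightarrow> 'a::field_char_0 poly" where
  "binomial_poly k = smult (1 / fact k) (\<Prod>i<k. [:- of_nat i, 1:])"

lemma poly_binomial_poly: "poly (binomial_poly k) x = x gchoose k"
  by (simp add: binomial_poly_def poly_prod gbinomial_prod_rev atLeast0LessThan)

lemma poly_eq_if_eventually_eq_nat:
  fixes p q :: "'a::field_char_0 poly"
  assumes "\<And>n. n \<ge> N \<Longrightarrow> poly p (a + of_nat n) = poly q (a + of_nat n)"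
  shows "p = q"
proof (rule ccontr)
  assume "p \<noteq> q"
  then have "finite {x. poly (p - q) x = 0}"
    by (intro poly_roots_finite) simp
  moreover have "(\<lambda>n. a + of_nat n) ` {N..} \<subseteq> {x. poly (p - q) x = 0}"
    using assms by auto
  moreover have "infinite ((\<lambda>n. a + of_nat n :: 'a) ` {N..})"
    using infinite_Ici[of N] by (auto dest!: finite_imageD simp: inj_on_def)
  ultimately show False
    using finite_subset by blast
qed

lemma order_poly_eq_binomial_sum:
  assumes "finite P"
  shows "order_poly P \<omega> = (\<Sum>k\<le>card P. smult (real (card (surj_P_partitions P \<omega> k))) (binomial_poly k))"
    (is "_ = ?q")
  unfolding order_poly_def
proof (rule the_equality)
  have poly_q: "poly ?q (real n) = real (card (P_partitions P \<omega> n))" for n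
    by (simp add: card_P_partitions_binomial_sum[OF assms] poly_sum poly_binomial_poly binomial_gbinomial)
  then show "\<forall>n\<ge>1. poly ?q (real n) = real (card (P_partitions P \<omega> n))"
    by blast
  fix q
  assume "\<forall>n\<ge>1. poly q (real n) = real (card (P_partitions P \<omega> n))"
  then show "q = ?q"
    using poly_q by (intro poly_eq_if_eventually_eq_nat[where a = 0 and N = 1]) simp
qed

lemma poly_order_poly:
  "finite P \<Longrightarrow> poly (order_poly P \<omega>) (real n) = real (card (P_partitions P \<omega> n))"
  by (simp add: order_poly_eq_binomial_sum poly_sum poly_binomial_poly binomial_gbinomial
      card_P_partitions_binomial_sum)

section \<open>Cover-compatible functions\<close>

lemma tranclp_covers:
  assumes "finite P"
  shows "x \<in> P \<Longrightarrow> y \<in> P \<Longrightarrow> x < y \<Longrightarrow> (covers P)\<^sup>+\<^sup>+ x y"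
proof (induction "card {z \<in> P. x < z \<and> z < y}" arbitrary: x y rule: less_induct)
  case less
  show ?case
  proof (cases "\<exists>z\<in>P. x < z \<and> z < y")
    case False
    then show ?thesis using less.prems unfolding covers_def by auto
  next
    case True
    then obtain z where z: "z \<in> P" "x < z" "z < y" by blast
    have "{w \<in> P. x < w \<and> w < z} \<subset> {w \<in> P. x < w \<and> w < y}"
      "{w \<in> P. z < w \<and> w < y} \<subset> {w \<in> P. x < w \<and> w < y}"
      using z by auto
    then have "(covers P)\<^sup>+\<^sup>+ x z" "(covers P)\<^sup>+\<^sup>+ z y"
      using less z assms by (auto intro!: less.hyps psubset_card_mono)
    then show ?thesis by simp
  qed
qed

definition cover_compatible :: "'a::order set \<Rightarrow> ('a \<Rightarrow> nat) \<Rightarrow> ('a \<Rightarrow> 'b::order) \<Rightarrow> bool" where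
  "cover_compatible P \<omega> f \<longleftrightarrow> (\<forall>x y. covers P x y \<longrightarrow> f y \<le> f x \<and> (\<omega> y < \<omega> x \<longrightarrow> f y < f x))"

lemma cover_compatible_less:
  assumes "finite P" "cover_compatible P \<omega> f" "x \<in> P" "y \<in> P" "x < y"
  shows "f y \<le> f x \<and> (\<omega> y < \<omega> x \<longrightarrow> f y < f x)"
  using tranclp_covers[OF assms(1,3-5)]
proof (induction rule: tranclp_trans_induct[consumes 1, case_names base step])
  case (base x y)
  then show ?case using assms(2) unfolding cover_compatible_def by blast
next
  case (step x y z)
  then show ?case by (meson le_less_trans less_le_trans linorder_not_less order_trans)
qed

lemma cover_compatible_antimono:
  "finite P \<Longrightarrow> cover_compatible P \<omega> f \<Longrightarrow> x \<in> P \<Longrightarrow> y \<in> P \<Longrightarrow> x \<le> y \<Longrightarrow> f y \<le> f x"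
  using cover_compatible_less[of P \<omega> f x y] by (cases "x = y") auto

lemma cover_compatible_cong:
  "(\<And>x. x \<in> P \<Longrightarrow> f x = g x) \<Longrightarrow> cover_compatible P \<omega> f \<longleftrightarrow> cover_compatible P \<omega> g"
  unfolding cover_compatible_def covers_def by auto

lemma cover_compatible_of_nat:
  "cover_compatible P \<omega> (\<lambda>x. int (f x)) \<longleftrightarrow> cover_compatible P \<omega> f"
  by (simp add: cover_compatible_def)

lemma P_partitions_iff_cover_compatible:
  assumes "finite P"
  shows "\<sigma> \<in> P_partitions P \<omega> n \<longleftrightarrow> \<sigma> \<in> P \<rightarrow>\<^sub>E {1..n} \<and> cover_compatible P \<omega> \<sigma>"
proof
  assume "\<sigma> \<in> P_partitions P \<omega> n"
  then show "\<sigma> \<in> P \<rightarrow>\<^sub>E {1..n} \<and> cover_compatible P \<omega> \<sigma>"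
    unfolding P_partitions_def cover_compatible_def covers_def by auto
next
  assume "\<sigma> \<in> P \<rightarrow>\<^sub>E {1..n} \<and> cover_compatible P \<omega> \<sigma>"
  then show "\<sigma> \<in> P_partitions P \<omega> n"
    using cover_compatible_antimono[OF assms] cover_compatible_less[OF assms]
    unfolding P_partitions_def by blast
qed

section \<open>Heights along saturated chains\<close>

lemma exists_maximal_above:
  fixes P :: "'a::order set"
  shows "finite P \<Longrightarrow> x \<in> P \<Longrightarrow> \<exists>M\<in>P. x \<le> M \<and> \<not> (\<exists>z\<in>P. M < z)"
  using finite_has_maximal2[of P x] by (auto simp: less_le)

lemma exists_minimal_below:
  fixes P :: "'a::order set"
  shows "finite P \<Longrightarrow> x \<in> P \<Longrightarrow> \<exists>m\<in>P. m \<le> x \<and> \<not> (\<exists>z\<in>P. z < m)"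
  using finite_has_minimal2[of P x] by (auto simp: less_le)

lemma saturated_chain_exists:
  assumes "finite P" "x \<in> P" "y \<in> P" "x \<le> y"
  obtains xs where "xs \<noteq> []" "hd xs = x" "last xs = y" "successively (covers P) xs"
proof -
  have "(covers P)\<^sup>*\<^sup>* x y"
    using assms tranclp_covers[OF assms(1-3)] by (cases "x = y") (auto intro: tranclp_into_rtranclp)
  then have "\<exists>xs. xs \<noteq> [] \<and> hd xs = x \<and> last xs = y \<and> successively (covers P) xs"
  proof (induction rule: rtranclp_induct)
    case base
    show ?case by (intro exI[of _ "[x]"]) simp
  next
    case (step y z)
    then obtain xs where "xs \<noteq> []" "hd xs = x" "last xs = y" "successively (covers P) xs"
      by blast
    with step.hyps(2) show ?case
      by (intro exI[of _ "xs @ [z]"]) (auto simp: successively_append_iff)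
  qed
  then show ?thesis using that by blast
qed

fun chain_sum :: "('a \<Rightarrow> 'a \<Rightarrow> 'b::monoid_add) \<Rightarrow> 'a list \<Rightarrow> 'b" where
  "chain_sum f (x # y # zs) = f x y + chain_sum f (y # zs)"
| "chain_sum f _ = 0"

lemma chain_eps_sum_eq_chain_sum: "chain_eps_sum \<omega> xs = chain_sum (eps \<omega>) xs"
proof (induction "eps \<omega>" xs rule: chain_sum.induct)
  case (1 x y zs)
  then show ?case
    unfolding chain_eps_sum_def by (simp add: sum.lessThan_Suc_shift del: sum.lessThan_Suc)
qed (simp_all add: chain_eps_sum_def)

lemma chain_sum_append_tl:
  "xs \<noteq> [] \<Longrightarrow> ys \<noteq> [] \<Longrightarrow> last xs = hd ys \<Longrightarrow>
    chain_sum f (xs @ tl ys) = chain_sum f xs + chain_sum f ys"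
proof (induction f xs rule: chain_sum.induct)
  case ("2_2" f x)
  then show ?case by (cases ys) simp_all
qed (simp_all add: add.assoc)

lemma even_chain_sum_eps_diff: "even (chain_sum (eps \<mu>) xs - chain_sum (eps \<omega>) xs)"
proof (induction "eps \<mu>" xs rule: chain_sum.induct)
  case (1 x y zs)
  have "even (eps \<mu> x y - eps \<omega> x y)" by (simp add: eps_def)
  with 1 show ?case by (simp add: algebra_simps)
qed simp_all

definition lower_chain :: "'a::order set \<Rightarrow> 'a \<Rightarrow> 'a list \<Rightarrow> bool" where
  "lower_chain P x xs \<longleftrightarrow> xs \<noteq> [] \<and> successively (covers P) xs \<and> hd xs \<in> P \<and>
     \<not> (\<exists>z\<in>P. z < hd xs) \<and> last xs = x"

lemma maximal_chain_iff_lower_chain: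
  "maximal_chain P xs \<longleftrightarrow> lower_chain P (last xs) xs \<and> last xs \<in> P \<and> \<not> (\<exists>z\<in>P. last xs < z)"
  unfolding maximal_chain_def lower_chain_def successively_conv_nth by auto

lemma lower_chain_append:
  assumes "lower_chain P x xs" "ys \<noteq> []" "hd ys = x" "successively (covers P) ys"
  shows "lower_chain P (last ys) (xs @ tl ys)"
proof -
  obtain ys' where ys: "ys = x # ys'" using assms(2,3) by (cases ys) auto
  have xs: "xs \<noteq> []" "last xs = x" "successively (covers P) xs"
    using assms(1) unfolding lower_chain_def by auto
  have "successively (covers P) (xs @ ys')"
    using assms(4) xs unfolding ys by (auto simp: successively_append_iff successively_Cons)
  moreover have "last (xs @ ys') = last ys"
    using xs unfolding ys by auto
  ultimately show ?thesis
    using assms(1) xs unfolding ys lower_chain_def by auto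
qed

lemma lower_chain_exists:
  assumes "finite P" "x \<in> P"
  shows "\<exists>xs. lower_chain P x xs"
proof -
  obtain m where m: "m \<in> P" "m \<le> x" "\<not> (\<exists>z\<in>P. z < m)"
    using exists_minimal_below[OF assms] by blast
  obtain xs where "xs \<noteq> []" "hd xs = m" "last xs = x" "successively (covers P) xs"
    using saturated_chain_exists[OF assms(1) m(1) assms(2) m(2)] .
  with m show ?thesis unfolding lower_chain_def by blast
qed

lemma graded_chain_sum_eq_rank:
  assumes "eps_graded P \<omega>" "maximal_chain P xs"
  shows "chain_sum (eps \<omega>) xs = eps_rank P \<omega>"
proof -
  obtain r where r: "\<forall>xs. maximal_chain P xs \<longrightarrow> chain_eps_sum \<omega> xs = r"
    using assms(1) unfolding eps_graded_def by blast
  then have "eps_rank P \<omega> = r"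
    unfolding eps_rank_def using assms(2) by (intro the_equality) auto
  then show ?thesis using r assms(2) by (simp add: chain_eps_sum_eq_chain_sum)
qed

lemma graded_lower_chain_sum_eq:
  assumes "finite P" "eps_graded P \<omega>" "x \<in> P" "lower_chain P x xs" "lower_chain P x ys"
  shows "chain_sum (eps \<omega>) xs = chain_sum (eps \<omega>) ys"
proof -
  obtain M where M: "M \<in> P" "x \<le> M" "\<not> (\<exists>z\<in>P. M < z)"
    using exists_maximal_above[OF assms(1,3)] by blast
  obtain zs where zs: "zs \<noteq> []" "hd zs = x" "last zs = M" "successively (covers P) zs"
    using saturated_chain_exists[OF assms(1,3) M(1,2)] .
  have "chain_sum (eps \<omega>) ws + chain_sum (eps \<omega>) zs = eps_rank P \<omega>" if "lower_chain P x ws" for ws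
  proof -
    have chain: "lower_chain P M (ws @ tl zs)"
      using lower_chain_append[OF that zs(1,2,4)] zs(3) by simp
    then have "last (ws @ tl zs) = M"
      unfolding lower_chain_def by simp
    with chain M have "maximal_chain P (ws @ tl zs)"
      unfolding maximal_chain_iff_lower_chain by simp
    then show ?thesis
      using that zs unfolding lower_chain_def
      by (simp add: graded_chain_sum_eq_rank[OF assms(2)] chain_sum_append_tl[symmetric])
  qed
  from this[OF assms(4)] this[OF assms(5)] show ?thesis by simp
qed

definition eps_height :: "'a::order set \<Rightarrow> ('a \<Rightarrow> nat) \<Rightarrow> 'a \<Rightarrow> int" where
  "eps_height P \<omega> x = chain_sum (eps \<omega>) (SOME xs. lower_chain P x xs)"

(* The chain picked by SOME does not depend on the labeling, so the heights for two
   labelings are read off the same chain. *)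

lemma even_eps_height_diff: "even (eps_height P \<mu> x - eps_height P \<omega> x)"
  unfolding eps_height_def by (rule even_chain_sum_eps_diff)

context
  fixes P :: "'a::order set" and \<omega> :: "'a \<Rightarrow> nat"
  assumes finite: "finite P" and graded: "eps_graded P \<omega>"
begin

lemma eps_height_eq_chain_sum:
  assumes "x \<in> P" "lower_chain P x xs"
  shows "eps_height P \<omega> x = chain_sum (eps \<omega>) xs"
  unfolding eps_height_def
  using graded_lower_chain_sum_eq[OF finite graded assms(1) _ assms(2)]
    someI_ex[OF lower_chain_exists[OF finite assms(1)]] by blast

lemma eps_height_minimal:
  assumes "m \<in> P" "\<not> (\<exists>z\<in>P. z < m)"
  shows "eps_height P \<omega> m = 0"
proof -
  have "lower_chain P m [m]" using assms unfolding lower_chain_def by simp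
  then show ?thesis using eps_height_eq_chain_sum[OF assms(1)] by simp
qed

lemma eps_height_covers:
  assumes "covers P x y"
  shows "eps_height P \<omega> y = eps_height P \<omega> x + eps \<omega> x y"
proof -
  have xy: "x \<in> P" "y \<in> P" using assms unfolding covers_def by auto
  obtain xs where xs: "lower_chain P x xs" using lower_chain_exists[OF finite xy(1)] by blast
  then have "lower_chain P y (xs @ [y])"
    using lower_chain_append[of P x xs "[x, y]"] assms by simp
  moreover have "xs \<noteq> []" "last xs = x" using xs unfolding lower_chain_def by auto
  ultimately show ?thesis
    using eps_height_eq_chain_sum[OF xy(1) xs] eps_height_eq_chain_sum[OF xy(2)]
      chain_sum_append_tl[of xs "[x, y]" "eps \<omega>"] by simp
qed

lemma eps_height_maximal:
  assumes "M \<in> P" "\<not> (\<exists>z\<in>P. M < z)"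
  shows "eps_height P \<omega> M = eps_rank P \<omega>"
proof -
  obtain xs where xs: "lower_chain P M xs" using lower_chain_exists[OF finite assms(1)] by blast
  then have "maximal_chain P xs"
    using assms unfolding maximal_chain_iff_lower_chain lower_chain_def by auto
  then show ?thesis
    using eps_height_eq_chain_sum[OF assms(1) xs] graded_chain_sum_eq_rank[OF graded] by simp
qed

end

section \<open>Shifting partitions by a potential\<close>

definition shift_partition :: "'a set \<Rightarrow> ('a \<Rightarrow> int) \<Rightarrow> ('a \<Rightarrow> nat) \<Rightarrow> 'a \<Rightarrow> nat" where
  "shift_partition P D \<sigma> = restrict (\<lambda>x. nat (int (\<sigma> x) + D x)) P"

locale partition_shift =
  fixes P :: "'a::order set" and \<omega> \<mu> :: "'a \<Rightarrow> nat" and D :: "'a \<Rightarrow> int" and c :: int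
  assumes finite: "finite P" and inj_\<omega>: "inj_on \<omega> P" and inj_\<mu>: "inj_on \<mu> P"
    and D_covers: "covers P x y \<Longrightarrow> 2 * (D y - D x) = eps \<mu> x y - eps \<omega> x y"
    and D_maximal: "x \<in> P \<Longrightarrow> \<not> (\<exists>z\<in>P. x < z) \<Longrightarrow> D x = 0"
    and D_minimal: "x \<in> P \<Longrightarrow> \<not> (\<exists>z\<in>P. z < x) \<Longrightarrow> D x = c"
begin

lemma swap: "partition_shift P \<mu> \<omega> (\<lambda>x. - D x) (- c)"
proof
  fix x y assume "covers P x y"
  then show "2 * (- D y - - D x) = eps \<omega> x y - eps \<mu> x y"
    using D_covers[of x y] by simp
qed (use finite inj_\<omega> inj_\<mu> D_maximal D_minimal in auto)

lemma cover_compatible_add: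
  assumes "cover_compatible P \<omega> \<sigma>"
  shows "cover_compatible P \<mu> (\<lambda>x. int (\<sigma> x) + D x)"
  unfolding cover_compatible_def
proof (intro allI impI)
  fix x y assume xy: "covers P x y"
  then have "\<omega> x \<noteq> \<omega> y" "\<mu> x \<noteq> \<mu> y"
    using inj_\<omega> inj_\<mu> unfolding covers_def inj_on_def by auto
  moreover have "\<sigma> y \<le> \<sigma> x" "\<omega> y < \<omega> x \<longrightarrow> \<sigma> y < \<sigma> x"
    using assms xy unfolding cover_compatible_def by auto
  ultimately show "int (\<sigma> y) + D y \<le> int (\<sigma> x) + D x \<and>
      (\<mu> y < \<mu> x \<longrightarrow> int (\<sigma> y) + D y < int (\<sigma> x) + D x)"
    using D_covers[OF xy] unfolding eps_def
    by (cases "\<omega> x < \<omega> y"; cases "\<mu> x < \<mu> y") auto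
qed

lemma shift_bounds:
  assumes "\<sigma> \<in> P_partitions P \<omega> n" "x \<in> P"
  shows "1 \<le> int (\<sigma> x) + D x \<and> int (\<sigma> x) + D x \<le> int n + c"
proof -
  have \<sigma>: "\<sigma> \<in> P \<rightarrow>\<^sub>E {1..n}" "cover_compatible P \<omega> \<sigma>"
    using assms(1) P_partitions_iff_cover_compatible[OF finite] by auto
  note antimono = cover_compatible_antimono[OF finite cover_compatible_add[OF \<sigma>(2)]]
  obtain M where M: "M \<in> P" "x \<le> M" "\<not> (\<exists>z\<in>P. M < z)"
    using exists_maximal_above[OF finite assms(2)] by blast
  obtain m where m: "m \<in> P" "m \<le> x" "\<not> (\<exists>z\<in>P. z < m)"
    using exists_minimal_below[OF finite assms(2)] by blast
  have "1 \<le> int (\<sigma> M) + D M" using \<sigma>(1) M D_maximal by auto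
  also have "\<dots> \<le> int (\<sigma> x) + D x" using antimono[OF assms(2) M(1,2)] .
  finally have lower: "1 \<le> int (\<sigma> x) + D x" .
  have "int (\<sigma> x) + D x \<le> int (\<sigma> m) + D m" using antimono[OF m(1) assms(2) m(2)] .
  also have "\<dots> \<le> int n + c" using \<sigma>(1) m D_minimal by auto
  finally show ?thesis using lower by simp
qed

lemma shift_partition_mem:
  assumes "\<sigma> \<in> P_partitions P \<omega> n" "int m = int n + c"
  shows "shift_partition P D \<sigma> \<in> P_partitions P \<mu> m"
proof -
  let ?\<tau> = "shift_partition P D \<sigma>"
  have shifted: "int (?\<tau> x) = int (\<sigma> x) + D x" if "x \<in> P" for x
    using shift_bounds[OF assms(1) that] that unfolding shift_partition_def by simp
  have "cover_compatible P \<mu> (\<lambda>x. int (\<sigma> x) + D x)"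
    using assms(1) cover_compatible_add P_partitions_iff_cover_compatible[OF finite] by blast
  then have "cover_compatible P \<mu> ?\<tau>"
    using cover_compatible_cong[of P "\<lambda>x. int (?\<tau> x)", OF shifted] cover_compatible_of_nat by blast
  moreover have "?\<tau> x \<in> {1..m}" if "x \<in> P" for x
    using shifted[OF that] shift_bounds[OF assms(1) that] assms(2) by auto
  then have "?\<tau> \<in> P \<rightarrow>\<^sub>E {1..m}"
    unfolding PiE_iff by (simp add: shift_partition_def)
  ultimately show ?thesis
    using P_partitions_iff_cover_compatible[OF finite] by blast
qed

lemma shift_partition_inverse:
  assumes "\<sigma> \<in> P_partitions P \<omega> n"
  shows "shift_partition P (\<lambda>x. - D x) (shift_partition P D \<sigma>) = \<sigma>"
proof (rule extensionalityI[where A = P])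
  show "\<sigma> \<in> extensional P" using assms unfolding P_partitions_def by (auto simp: PiE_def)
  fix x assume "x \<in> P"
  then show "shift_partition P (\<lambda>x. - D x) (shift_partition P D \<sigma>) x = \<sigma> x"
    using shift_bounds[OF assms \<open>x \<in> P\<close>] unfolding shift_partition_def by simp
qed (simp add: shift_partition_def)

lemma card_P_partitions_eq:
  assumes "int m = int n + c"
  shows "card (P_partitions P \<omega> n) = card (P_partitions P \<mu> m)"
proof (rule bij_betw_same_card[OF bij_betw_byWitness[where f' = "shift_partition P (\<lambda>x. - D x)"]])
  interpret swapped: partition_shift P \<mu> \<omega> "\<lambda>x. - D x" "- c" by (rule swap)
  have m: "int n = int m + - c" using assms by simp
  show "\<forall>\<sigma>\<in>P_partitions P \<omega> n. shift_partition P (\<lambda>x. - D x) (shift_partition P D \<sigma>) = \<sigma>"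
    using shift_partition_inverse by blast
  show "\<forall>\<tau>\<in>P_partitions P \<mu> m. shift_partition P D (shift_partition P (\<lambda>x. - D x) \<tau>) = \<tau>"
    using swapped.shift_partition_inverse by simp
  show "shift_partition P D ` P_partitions P \<omega> n \<subseteq> P_partitions P \<mu> m"
    using shift_partition_mem[OF _ assms] by blast
  show "shift_partition P (\<lambda>x. - D x) ` P_partitions P \<mu> m \<subseteq> P_partitions P \<omega> n"
    using swapped.shift_partition_mem[OF _ m] by blast
qed

lemma order_poly_eq_pcompose: "order_poly P \<omega> = pcompose (order_poly P \<mu>) [:of_int c, 1:]"
proof (rule poly_eq_if_eventually_eq_nat[where a = 0 and N = "nat (- c)"])
  fix n assume "nat (- c) \<le> n"
  then have m: "int (nat (int n + c)) = int n + c" by simp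
  have "poly (order_poly P \<omega>) (0 + of_nat n) = real (card (P_partitions P \<mu> (nat (int n + c))))"
    by (simp add: poly_order_poly[OF finite] card_P_partitions_eq[OF m])
  also have "\<dots> = poly (order_poly P \<mu>) (real (nat (int n + c)))"
    by (simp add: poly_order_poly[OF finite])
  also have "real (nat (int n + c)) = of_int c + of_nat n"
    using m by (metis add.commute of_int_add of_int_of_nat_eq)
  finally show "poly (order_poly P \<omega>) (0 + of_nat n) = poly (pcompose (order_poly P \<mu>) [:of_int c, 1:]) (0 + of_nat n)"
    by (simp add: poly_pcompose)
qed

end

lemma even_eps_rank_diff:
  assumes "finite P" "P \<noteq> {}" "eps_graded P \<omega>" "eps_graded P \<mu>"
  shows "even (eps_rank P \<mu> - eps_rank P \<omega>)"
proof -
  obtain M where M: "M \<in> P" "\<not> (\<exists>z\<in>P. M < z)"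
    using exists_maximal_above[OF assms(1)] assms(2) by blast
  then show ?thesis
    using even_eps_height_diff[of P \<mu> M \<omega>]
    by (simp add: eps_height_maximal[OF assms(1,3) M] eps_height_maximal[OF assms(1,4) M])
qed

lemma graded_partition_shift:
  assumes "finite P" "P \<noteq> {}" "is_labeling P \<omega>" "is_labeling P \<mu>"
    and graded: "eps_graded P \<omega>" "eps_graded P \<mu>"
  obtains D where "partition_shift P \<omega> \<mu> D ((eps_rank P \<omega> - eps_rank P \<mu>) div 2)"
proof
  let ?h = "\<lambda>x. eps_height P \<mu> x - eps_height P \<omega> x - (eps_rank P \<mu> - eps_rank P \<omega>)"
  have even: "2 * (?h x div 2) = ?h x" for x
    using even_eps_rank_diff[OF assms(1,2) graded] even_eps_height_diff[of P \<mu> x \<omega>] by simp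
  show "partition_shift P \<omega> \<mu> (\<lambda>x. ?h x div 2) ((eps_rank P \<omega> - eps_rank P \<mu>) div 2)"
  proof
    show "finite P" "inj_on \<omega> P" "inj_on \<mu> P"
      using assms(1,3,4) unfolding is_labeling_def bij_betw_def by auto
    fix x y assume "covers P x y"
    then show "2 * (?h y div 2 - ?h x div 2) = eps \<mu> x y - eps \<omega> x y"
      using even[of x] even[of y]
      by (simp add: eps_height_covers[OF assms(1) graded(1)] eps_height_covers[OF assms(1) graded(2)])
  next
    fix x assume "x \<in> P" "\<not> (\<exists>z\<in>P. x < z)"
    then show "?h x div 2 = 0"
      by (simp add: eps_height_maximal[OF assms(1) graded(1)] eps_height_maximal[OF assms(1) graded(2)])
  next
    fix x assume "x \<in> P" "\<not> (\<exists>z\<in>P. z < x)"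
    then show "?h x div 2 = (eps_rank P \<omega> - eps_rank P \<mu>) div 2"
      by (simp add: eps_height_minimal[OF assms(1) graded(1)] eps_height_minimal[OF assms(1) graded(2)])
  qed
qed

theorem theorem2p2:
  fixes P :: "'a::order set" and \<omega> \<mu> :: "'a \<Rightarrow> nat"
  assumes "finite P" and "P \<noteq> {}"
    and "is_labeling P \<omega>" and "is_labeling P \<mu>"
    and "eps_graded P \<omega>" and "eps_graded P \<mu>"
  shows "pcompose (order_poly P \<omega>) [:- (of_int (eps_rank P \<omega>) / 2), 1:]
       = pcompose (order_poly P \<mu>) [:- (of_int (eps_rank P \<mu>) / 2), 1:]"
proof -
  define c where "c = (eps_rank P \<omega> - eps_rank P \<mu>) div 2"
  obtain D where "partition_shift P \<omega> \<mu> D c"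
    using graded_partition_shift[OF assms] unfolding c_def .
  then have \<omega>_\<mu>: "order_poly P \<omega> = pcompose (order_poly P \<mu>) [:of_int c, 1:]"
    by (rule partition_shift.order_poly_eq_pcompose)
  have "2 * c = eps_rank P \<omega> - eps_rank P \<mu>"
    using even_eps_rank_diff[OF assms(1,2,5,6)] unfolding c_def
    by (metis dvd_minus_iff minus_diff_eq dvd_mult_div_cancel)
  then have "2 * real_of_int c = of_int (eps_rank P \<omega>) - of_int (eps_rank P \<mu>)"
    by (metis of_int_diff of_int_mult of_int_numeral)
  then have "of_int c - of_int (eps_rank P \<omega>) / 2 = - (of_int (eps_rank P \<mu>) / (2::real))"
    by linarith
  then show ?thesis
    unfolding \<omega>_\<mu> pcompose_assoc[symmetric] by (simp add: pcompose_pCons)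
qed

end
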